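(* Let $\mathcal{A}=\{H_{e_i}:\boldsymbol\alpha_{e_i}\cdot\mathbf{x}=0\mid 1\le i\le m\}$ be a linear multi-arrangement in $\mathbb{R}^n$ (each $\boldsymbol\alpha_{e_i}\ne 0$), totally ordered by $H_{e_1}\prec\cdots\prec H_{e_m}$, and let $\mathscr{B}_k$ and $\phi_k$ be as in the context. Then for each $k=1,\dots,m$, $\phi_k$ is a well-defined bijection from $\mathscr{B}_{k-1}$ onto $\mathscr{B}_k$. Consequently, the map sending a region $\Delta\in\mathcal{R}(\mathcal{A})$ to the unique $\mathcal{B}\in\mathrm{NBC}(\mathcal{A})$ with $\phi_m\circ\cdots\circ\phi_1(\emptyset,\Delta)=(\mathcal{B},\cap\mathcal{B})$ is a bijection from $\mathcal{R}(\mathcal{A})$ onto $\mathrm{NBC}(\mathcal{A})$.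
   Context: For a (multi)set $\mathcal{B}$ of hyperplanes, $\cap\mathcal{B}=\bigcap_{H\in\mathcal{B}}H$ (with $\cap\emptyset=\mathbb{R}^n$). A circuit of $\mathcal{A}$ is a minimal sub(multi)set $\mathcal{B}\subseteq\mathcal{A}$ with $\cap\mathcal{B}\ne\emptyset$ and $\dim(\cap\mathcal{B})+|\mathcal{B}|=n+1$; a broken circuit is a circuit with its $\prec$-maximal element removed; $\mathcal{B}\subseteq\mathcal{A}$ is an NBC subset if it contains no broken circuit (and $\cap\mathcal{B}\neq\emptyset$); $\mathrm{NBC}(\mathcal{A})$ is the set of NBC subsets. For a finite multiset $\mathcal{H}$ of hyperplanes in an affine subspace $W$, its regions are the connected components of $W-\bigcup_{H\in\mathcal{H}}H$ (if $\mathcal{H}=\emptyset$, the single region is $W$); $\mathcal{R}(\cdot)$ denotes the set of regions. $H_e^+:\boldsymbol\alpha_e\cdot\mathbf{x}>0$, $H_e^-:\boldsymbol\alpha_e\cdot\mathbf{x}<0$. Let $\mathcal{A}_k=\{H_{e_i}:i\le k\}$, $\mathcal{A}_k^c=\mathcal{A}-\mathcal{A}_k$, and for $\mathcal{B}\subseteq\mathcal{A}$, $\mathcal{A}_k^c/\mathcal{B}$ is the multi-arrangement in $\cap\mathcal{B}$ consisting of $(\cap\mathcal{B})\cap H$ for $H\in\mathcal{A}_k^c$ with $(\cap\mathcal{B})\cap H\ne\cap\mathcal{B}$ and $\ne\emptyset$. $\mathscr{B}_k=\{(\mathcal{B}_k,\Delta_k):\mathcal{B}_k\subseteq\mathcal{A}_k,\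 \mathcal{B}_k\in\mathrm{NBC}(\mathcal{A}),\ \Delta_k\in\mathcal{R}(\mathcal{A}_k^c/\mathcal{B}_k)\}$. For $(\mathcal{B}_{k-1},\Delta_{k-1})\in\mathscr{B}_{k-1}$ let $\Delta_k'$ be the unique region of $\mathcal{A}_k^c/\mathcal{B}_{k-1}$ containing $\Delta_{k-1}$, and set $\phi_k(\mathcal{B}_{k-1},\Delta_{k-1})=(\mathcal{B}_{k-1}\cup\{H_{e_k}\},\Delta_k'\cap H_{e_k})$ if $\Delta_{k-1}\subseteq H_{e_k}^+$ and $\Delta_{k-1}\ne\Delta_k'$; $=(\mathcal{B}_{k-1},\Delta_{k-1})$ if $\Delta_{k-1}\subseteq H_{e_k}^+$ and $\Delta_{k-1}=\Delta_k'$; $=(\mathcal{B}_{k-1},\Delta_k')$ if $\Delta_{k-1}\subseteq H_{e_k}^-$. *)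

theory Defs
  imports "HOL-Analysis.Analysis"
begin

text \<open>The multi-arrangement is given by normals alpha 1, ..., alpha m (repetitions allowed);
  hyperplane H_{e_i} is indexed by i, and the total order is the order of indices.
  Sub(multi)sets of the arrangement are sets of indices.\<close>

definition hyp :: "(nat \<Rightarrow> real^'n) \<Rightarrow> nat \<Rightarrow> (real^'n) set" where
  "hyp \<alpha> i = {x. \<alpha> i \<bullet> x = 0}"

definition Hpos :: "(nat \<Rightarrow> real^'n) \<Rightarrow> nat \<Rightarrow> (real^'n) set" where
  "Hpos \<alpha> i = {x. \<alpha> i \<bullet> x > 0}"

definition Hneg :: "(nat \<Rightarrow> real^'n) \<Rightarrow> nat \<Rightarrow> (real^'n) set" where
  "Hneg \<alpha> i = {x. \<alpha> i \<bullet> x < 0}"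

definition capB :: "(nat \<Rightarrow> real^'n) \<Rightarrow> nat set \<Rightarrow> (real^'n) set" where
  "capB \<alpha> B = (\<Inter>i\<in>B. hyp \<alpha> i)"

definition circ_cond :: "(nat \<Rightarrow> real^'n) \<Rightarrow> nat set \<Rightarrow> bool" where
  "circ_cond \<alpha> C \<longleftrightarrow> capB \<alpha> C \<noteq> {} \<and> dim (capB \<alpha> C) + card C = CARD('n) + 1"

definition circuit :: "(nat \<Rightarrow> real^'n) \<Rightarrow> nat \<Rightarrow> nat set \<Rightarrow> bool" where
  "circuit \<alpha> m C \<longleftrightarrow> C \<subseteq> {1..m} \<and> circ_cond \<alpha> C \<and> (\<forall>D. D \<subset> C \<longrightarrow> \<not> circ_cond \<alpha> D)"

definition broken_circuit :: "(nat \<Rightarrow> real^'n) \<Rightarrow> nat \<Rightarrow> nat set \<Rightarrow> bool" where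
  "broken_circuit \<alpha> m D \<longleftrightarrow> (\<exists>C. circuit \<alpha> m C \<and> D = C - {Max C})"

definition NBC :: "(nat \<Rightarrow> real^'n) \<Rightarrow> nat \<Rightarrow> nat set \<Rightarrow> bool" where
  "NBC \<alpha> m B \<longleftrightarrow> B \<subseteq> {1..m} \<and> capB \<alpha> B \<noteq> {} \<and>
     (\<forall>D. broken_circuit \<alpha> m D \<longrightarrow> \<not> D \<subseteq> B)"

definition NBCset :: "(nat \<Rightarrow> real^'n) \<Rightarrow> nat \<Rightarrow> nat set set" where
  "NBCset \<alpha> m = {B. NBC \<alpha> m B}"

definition regions :: "'a::topological_space set \<Rightarrow> 'a set set \<Rightarrow> 'a set set" where
  "regions W Hs = components (W - \<Union>Hs)"

text \<open>The arrangement A_k^c / B inside capB B (A_k^c = indices k+1..m).\<close>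
definition restr :: "(nat \<Rightarrow> real^'n) \<Rightarrow> nat \<Rightarrow> nat \<Rightarrow> nat set \<Rightarrow> (real^'n) set set" where
  "restr \<alpha> m k B = {capB \<alpha> B \<inter> hyp \<alpha> i | i. i \<in> {k+1..m} \<and>
      capB \<alpha> B \<inter> hyp \<alpha> i \<noteq> capB \<alpha> B \<and> capB \<alpha> B \<inter> hyp \<alpha> i \<noteq> {}}"

definition scrB :: "(nat \<Rightarrow> real^'n) \<Rightarrow> nat \<Rightarrow> nat \<Rightarrow> (nat set \<times> (real^'n) set) set" where
  "scrB \<alpha> m k = {(B, \<Delta>). B \<subseteq> {1..k} \<and> NBC \<alpha> m B \<and> \<Delta> \<in> regions (capB \<alpha> B) (restr \<alpha> m k B)}"

definition regionA :: "(nat \<Rightarrow> real^'n) \<Rightarrow> nat \<Rightarrow> (real^'n) set set" where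
  "regionA \<alpha> m = regions UNIV (hyp \<alpha> ` {1..m})"

definition regDelta :: "(nat \<Rightarrow> real^'n) \<Rightarrow> nat \<Rightarrow> nat \<Rightarrow> nat set \<Rightarrow> (real^'n) set \<Rightarrow> (real^'n) set" where
  "regDelta \<alpha> m k B \<Delta> = (THE R. R \<in> regions (capB \<alpha> B) (restr \<alpha> m k B) \<and> \<Delta> \<subseteq> R)"

definition phi :: "(nat \<Rightarrow> real^'n) \<Rightarrow> nat \<Rightarrow> nat \<Rightarrow> nat set \<times> (real^'n) set \<Rightarrow> nat set \<times> (real^'n) set" where
  "phi \<alpha> m k p = (let B = fst p; \<Delta> = snd p; \<Delta>' = regDelta \<alpha> m k B \<Delta> in
     if \<Delta> \<subseteq> Hpos \<alpha> k then
       (if \<Delta> \<noteq> \<Delta>' then (B \<union> {k}, \<Delta>' \<inter> hyp \<alpha> k) else (B, \<Delta>))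
     else (B, \<Delta>'))"

primrec phiComp :: "(nat \<Rightarrow> real^'n) \<Rightarrow> nat \<Rightarrow> nat \<Rightarrow> nat set \<times> (real^'n) set \<Rightarrow> nat set \<times> (real^'n) set" where
  "phiComp \<alpha> m 0 = id"
| "phiComp \<alpha> m (Suc j) = phi \<alpha> m (Suc j) \<circ> phiComp \<alpha> m j"

end

(*
  Inside the flat capB B, the hyperplanes H_i with i > k cut out regions that are exactly the
  sign classes of generic points, and for an NBC set B within {1..k} none of them contains
  capB B: otherwise alpha_i would lie in the span of a minimal subfamily of B, which together
  with i is a circuit with maximum i whose broken circuit lies in B.  So phi_k either forgets the
  sign of alpha_k, passing from Delta to the region Delta' of the coarser arrangement containing
  it, or, when Delta is on the positive side of H_k and H_k cuts Delta', moves to the face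
  Delta' cap H_k of the flat of B + {k}, and B + {k} is again NBC.  A pair at level k has exactly
  one preimage: push a point of the face slightly to the positive side of H_k, or take a point of
  Delta' on the negative side of H_k if there is one, and Delta' itself otherwise.
*)

theory Submission
  imports Defs
begin

lemma subspace_capB: "subspace (capB \<alpha> B)"
  unfolding subspace_def capB_def hyp_def by (auto simp: inner_add_right)

lemma zero_in_capB: "0 \<in> capB \<alpha> B"
  by (simp add: capB_def hyp_def)

lemma capB_empty: "capB \<alpha> {} = UNIV"
  by (simp add: capB_def)

lemma capB_insert: "capB \<alpha> (insert k B) = capB \<alpha> B \<inter> hyp \<alpha> k"
  by (auto simp: capB_def)

lemma capB_eq_orthogonal_span: "capB \<alpha> B = {y. \<forall>x\<in>span (\<alpha> ` B). orthogonal x y}"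
proof
  show "capB \<alpha> B \<subseteq> {y. \<forall>x\<in>span (\<alpha> ` B). orthogonal x y}"
  proof clarify
    fix y x assume y: "y \<in> capB \<alpha> B" and x: "x \<in> span (\<alpha> ` B)"
    have "orthogonal y x"
      by (rule orthogonal_to_span[OF x])
        (use y in \<open>auto simp: capB_def hyp_def orthogonal_def inner_commute\<close>)
    then show "orthogonal x y" by (simp add: orthogonal_commute)
  qed
next
  show "{y. \<forall>x\<in>span (\<alpha> ` B). orthogonal x y} \<subseteq> capB \<alpha> B"
    by (auto simp: capB_def hyp_def orthogonal_def intro: span_base)
qed

lemma dim_capB: "dim (capB \<alpha> B) + dim (\<alpha> ` B) = CARD('n)"
  for \<alpha> :: "nat \<Rightarrow> real^'n"
proof -
  have "dim {y \<in> UNIV. \<forall>x \<in> span (\<alpha> ` B). orthogonal x y} + dim (span (\<alpha> ` B))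
      = dim (UNIV :: (real^'n) set)"
    by (rule dim_subspace_orthogonal_to_vectors) auto
  then show ?thesis by (simp add: capB_eq_orthogonal_span)
qed

lemma capB_subset_hyp_iff: "capB \<alpha> B \<subseteq> hyp \<alpha> i \<longleftrightarrow> \<alpha> i \<in> span (\<alpha> ` B)"
proof
  assume sub: "capB \<alpha> B \<subseteq> hyp \<alpha> i"
  obtain y z where y: "y \<in> span (\<alpha> ` B)" and z: "\<And>w. w \<in> span (\<alpha> ` B) \<Longrightarrow> orthogonal z w"
    and decomp: "\<alpha> i = y + z"
    using orthogonal_subspace_decomp_exists by blast
  have "z \<in> capB \<alpha> B"
    unfolding capB_eq_orthogonal_span using z by (simp add: orthogonal_commute)
  then have "\<alpha> i \<bullet> z = 0" using sub by (auto simp: hyp_def)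
  moreover have "y \<bullet> z = 0" using z[OF y] by (simp add: orthogonal_def inner_commute)
  ultimately have "z = 0" using decomp by (simp add: inner_add_left)
  then show "\<alpha> i \<in> span (\<alpha> ` B)" using decomp y by simp
next
  assume "\<alpha> i \<in> span (\<alpha> ` B)"
  then show "capB \<alpha> B \<subseteq> hyp \<alpha> i"
    unfolding capB_eq_orthogonal_span by (auto simp: hyp_def orthogonal_def)
qed

lemma subspace_inner_eq_exists:
  assumes "subspace V" and "\<not> V \<subseteq> hyp \<alpha> k"
  shows "\<exists>v\<in>V. \<alpha> k \<bullet> v = c"
proof -
  obtain v where "v \<in> V" and "\<alpha> k \<bullet> v \<noteq> 0" using assms(2) by (auto simp: hyp_def)
  then show ?thesis
    by (intro bexI[of _ "(c / (\<alpha> k \<bullet> v)) *\<^sub>R v"]) (auto intro: subspace_scale[OF assms(1)])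
qed

lemma sgn_inner_perturb:
  assumes "finite I" and "\<forall>i\<in>I. a i \<bullet> w \<noteq> 0"
  shows "\<exists>e>0. \<forall>i\<in>I. sgn (a i \<bullet> (w + e *\<^sub>R v)) = sgn (a i \<bullet> w)"
proof -
  have "\<forall>\<^sub>F e in at_right (0::real). sgn (a i \<bullet> (w + e *\<^sub>R v)) = sgn (a i \<bullet> w)"
    if i: "i \<in> I" for i
  proof -
    have "((\<lambda>e. a i \<bullet> (w + e *\<^sub>R v)) \<longlongrightarrow> a i \<bullet> (w + 0 *\<^sub>R v)) (at_right (0::real))"
      by (intro tendsto_intros)
    then have lim: "((\<lambda>e. a i \<bullet> (w + e *\<^sub>R v)) \<longlongrightarrow> a i \<bullet> w) (at_right (0::real))"
      by simp
    consider "a i \<bullet> w > 0" | "a i \<bullet> w < 0" using assms(2) i by fastforce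
    then show ?thesis
    proof cases
      case 1
      show ?thesis using order_tendstoD(1)[OF lim 1] by eventually_elim (use 1 in simp)
    next
      case 2
      show ?thesis using order_tendstoD(2)[OF lim 2] by eventually_elim (use 2 in simp)
    qed
  qed
  then have "\<forall>\<^sub>F e in at_right (0::real). 0 < e \<and> (\<forall>i\<in>I. sgn (a i \<bullet> (w + e *\<^sub>R v)) = sgn (a i \<bullet> w))"
    by (intro eventually_conj eventually_at_right_less eventually_ball_finite assms(1)) blast
  from eventually_happens'[OF trivial_limit_at_right_real this] show ?thesis by blast
qed

section \<open>Circuits and NBC sets\<close>

lemma circ_cond_iff:
  fixes \<alpha> :: "nat \<Rightarrow> real^'n"
  shows "circ_cond \<alpha> C \<longleftrightarrow> card C = dim (\<alpha> ` C) + 1"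
  using dim_capB[of \<alpha> C] zero_in_capB[of \<alpha> C] unfolding circ_cond_def by auto

lemma dim_image_eq_card:
  assumes "\<forall>d\<in>D. \<alpha> d \<notin> span (\<alpha> ` (D - {d}))"
  shows "dim (\<alpha> ` D) = card D"
proof -
  have "inj_on \<alpha> D"
  proof (rule inj_onI, rule ccontr)
    fix c d assume "c \<in> D" "d \<in> D" "\<alpha> c = \<alpha> d" "c \<noteq> d"
    then have "\<alpha> d \<in> span (\<alpha> ` (D - {d}))" by (metis DiffI imageI singletonD span_base)
    then show False using assms \<open>d \<in> D\<close> by blast
  qed
  moreover have "independent (\<alpha> ` D)"
  proof
    assume "dependent (\<alpha> ` D)"
    then obtain d where d: "d \<in> D" "\<alpha> d \<in> span (\<alpha> ` D - {\<alpha> d})"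
      by (auto simp: dependent_def)
    have "\<alpha> ` D - {\<alpha> d} \<subseteq> \<alpha> ` (D - {d})" by auto
    then have "\<alpha> d \<in> span (\<alpha> ` (D - {d}))" using d span_mono by blast
    then show False using assms d by blast
  qed
  ultimately show ?thesis by (simp add: dim_eq_card_independent card_image)
qed

lemma circuit_insert_minimal:
  fixes \<alpha> :: "nat \<Rightarrow> real^'n"
  assumes sub: "insert i C \<subseteq> {1..m}" and i: "i \<notin> C" and span: "\<alpha> i \<in> span (\<alpha> ` C)"
    and minimal: "\<And>D. D \<subset> C \<Longrightarrow> \<alpha> i \<notin> span (\<alpha> ` D)"
  shows "circuit \<alpha> m (insert i C)"
proof -
  have fin: "finite C" by (rule finite_subset[OF _ finite_atLeastAtMost]) (use sub in auto)
  have dim_eq: "dim (\<alpha> ` D) = card D" if D: "D \<subseteq> C" for D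
  proof (rule dim_image_eq_card, intro ballI notI)
    fix d assume d: "d \<in> D" and "\<alpha> d \<in> span (\<alpha> ` (D - {d}))"
    then have d_span: "\<alpha> d \<in> span (\<alpha> ` (C - {d}))"
      using D by (meson Diff_mono image_mono order_refl span_mono subsetD)
    have "\<alpha> ` C = insert (\<alpha> d) (\<alpha> ` (C - {d}))" using d D by auto
    then have "span (\<alpha> ` C) = span (\<alpha> ` (C - {d}))" using span_redundant[OF d_span] by simp
    then show False using minimal[of "C - {d}"] span d D by auto
  qed
  have "circ_cond \<alpha> (insert i C)"
    using dim_eq[of C] span i fin by (simp add: circ_cond_iff dim_insert)
  moreover have "\<not> circ_cond \<alpha> D" if D: "D \<subset> insert i C" for D
  proof (cases "i \<in> D")
    case False
    then have "D \<subseteq> C" using D by blast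
    then show ?thesis using dim_eq[of D] by (simp add: circ_cond_iff)
  next
    case True
    have D0: "D - {i} \<subset> C" using D True i by auto
    have "\<alpha> ` D = insert (\<alpha> i) (\<alpha> ` (D - {i}))" using True by auto
    then have "dim (\<alpha> ` D) = card (D - {i}) + 1"
      using minimal[OF D0] dim_eq[of "D - {i}"] D0 by (simp add: dim_insert)
    also have "\<dots> = card D"
      using True D fin by (metis Suc_eq_plus1 card_Suc_Diff1 finite_insert finite_subset psubset_imp_subset)
    finally show ?thesis by (simp add: circ_cond_iff)
  qed
  ultimately show ?thesis using sub unfolding circuit_def by blast
qed

lemma circuit_in_span_Diff:
  fixes \<alpha> :: "nat \<Rightarrow> real^'n"
  assumes C: "circuit \<alpha> m C" and j: "j \<in> C"
  shows "\<alpha> j \<in> span (\<alpha> ` (C - {j}))"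
proof (rule ccontr)
  assume "\<alpha> j \<notin> span (\<alpha> ` (C - {j}))"
  moreover have "\<alpha> ` C = insert (\<alpha> j) (\<alpha> ` (C - {j}))" using j by auto
  ultimately have "dim (\<alpha> ` C) = dim (\<alpha> ` (C - {j})) + 1" by (simp add: dim_insert)
  moreover have "card C = dim (\<alpha> ` C) + 1" using C by (simp add: circuit_def circ_cond_iff)
  moreover have "finite C" using C finite_subset by (auto simp: circuit_def)
  ultimately have "card (C - {j}) = dim (\<alpha> ` (C - {j})) + 1"
    using j by (simp add: card_Diff_singleton)
  moreover have "\<not> circ_cond \<alpha> (C - {j})" using C j by (auto simp: circuit_def)
  ultimately show False by (simp add: circ_cond_iff)
qed

lemma NBC_subset: "NBC \<alpha> m B \<Longrightarrow> A \<subseteq> B \<Longrightarrow> NBC \<alpha> m A"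
  unfolding NBC_def using zero_in_capB by blast

lemma NBC_empty:
  fixes \<alpha> :: "nat \<Rightarrow> real^'n"
  assumes "\<forall>i\<in>{1..m}. \<alpha> i \<noteq> 0"
  shows "NBC \<alpha> m {}"
proof -
  have "\<not> broken_circuit \<alpha> m {}"
  proof
    assume "broken_circuit \<alpha> m {}"
    then obtain C where C: "circuit \<alpha> m C" and "C - {Max C} = {}"
      by (auto simp: broken_circuit_def)
    moreover have "C \<noteq> {}" using C by (auto simp: circuit_def circ_cond_iff)
    ultimately obtain j where j: "C = {j}" by blast
    then have "dim {\<alpha> j} = 0" using C by (simp add: circuit_def circ_cond_iff)
    then have "\<alpha> j = 0" by (simp add: dim_insert split: if_splits)
    moreover have "j \<in> {1..m}" using C j by (auto simp: circuit_def)
    ultimately show False using assms by blast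
  qed
  then show ?thesis using zero_in_capB by (auto simp: NBC_def)
qed

lemma NBC_not_subset_hyp:
  fixes \<alpha> :: "nat \<Rightarrow> real^'n"
  assumes nbc: "NBC \<alpha> m B" and i: "i \<in> {1..m}" and less: "\<forall>b\<in>B. b < i"
  shows "\<not> capB \<alpha> B \<subseteq> hyp \<alpha> i"
proof
  assume "capB \<alpha> B \<subseteq> hyp \<alpha> i"
  then have "\<alpha> i \<in> span (\<alpha> ` B)" by (simp add: capB_subset_hyp_iff)
  moreover have "finite B" using nbc finite_subset by (auto simp: NBC_def)
  ultimately obtain C where C: "C \<subseteq> B" "\<alpha> i \<in> span (\<alpha> ` C)"
    and least: "\<forall>D. D \<subseteq> B \<and> \<alpha> i \<in> span (\<alpha> ` D) \<longrightarrow> D \<subseteq> C \<longrightarrow> C = D"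
    using finite_has_minimal2[of "{C. C \<subseteq> B \<and> \<alpha> i \<in> span (\<alpha> ` C)}" B] by auto
  have minimal: "\<alpha> i \<notin> span (\<alpha> ` D)" if "D \<subset> C" for D
    using least that C(1) by blast
  have iC: "i \<notin> C" using C less by auto
  have "circuit \<alpha> m (insert i C)"
    using C nbc i iC minimal by (intro circuit_insert_minimal) (auto simp: NBC_def)
  moreover have "Max (insert i C) = i"
    using C less \<open>finite B\<close> by (intro Max_eqI) (auto intro: less_imp_le finite_subset)
  ultimately have "broken_circuit \<alpha> m C"
    unfolding broken_circuit_def using iC by (intro exI[of _ "insert i C"]) auto
  then show False using nbc C by (auto simp: NBC_def)
qed

lemma NBC_insert:
  fixes \<alpha> :: "nat \<Rightarrow> real^'n"
  assumes nbc: "NBC \<alpha> m B" and k: "k \<in> {1..m}"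
    and z: "z \<in> capB \<alpha> (insert k B)" and generic: "\<forall>j\<in>{k+1..m}. \<alpha> j \<bullet> z \<noteq> 0"
  shows "NBC \<alpha> m (insert k B)"
proof -
  have "\<not> D \<subseteq> insert k B" if bc: "broken_circuit \<alpha> m D" for D
  proof
    assume D_sub: "D \<subseteq> insert k B"
    obtain C where C: "circuit \<alpha> m C" and D: "D = C - {Max C}"
      using bc by (auto simp: broken_circuit_def)
    have "k \<in> D" using D_sub nbc bc by (auto simp: NBC_def)
    have C_sub: "C \<subseteq> {1..m}" using C by (simp add: circuit_def)
    then have "finite C" using finite_subset by blast
    then have j: "Max C \<in> C" "k < Max C"
      using \<open>k \<in> D\<close> D by (auto intro: Max_in simp: le_neq_implies_less)
    have "\<alpha> (Max C) \<in> span (\<alpha> ` (C - {Max C}))" by (rule circuit_in_span_Diff[OF C j(1)])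
    then have "\<alpha> (Max C) \<in> span (\<alpha> ` insert k B)"
      using D D_sub span_mono[OF image_mono] by blast
    then have "capB \<alpha> (insert k B) \<subseteq> hyp \<alpha> (Max C)" unfolding capB_subset_hyp_iff .
    then have "\<alpha> (Max C) \<bullet> z = 0" using z by (auto simp: hyp_def)
    moreover have "Max C \<in> {k+1..m}" using j C_sub by auto
    ultimately show False using generic by blast
  qed
  moreover have "insert k B \<subseteq> {1..m}" using nbc k by (auto simp: NBC_def)
  ultimately show ?thesis using zero_in_capB[of \<alpha> "insert k B"] unfolding NBC_def by blast
qed

section \<open>Regions of a central arrangement in a subspace\<close>

definition generic :: "(nat \<Rightarrow> real^'n) \<Rightarrow> nat set \<Rightarrow> (real^'n) set \<Rightarrow> (real^'n) set" where
  "generic \<alpha> I V = {y\<in>V. \<forall>i\<in>I. \<alpha> i \<bullet> y \<noteq> 0}"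

definition sign_class :: "(nat \<Rightarrow> real^'n) \<Rightarrow> nat set \<Rightarrow> (real^'n) set \<Rightarrow> real^'n \<Rightarrow> (real^'n) set"
  where "sign_class \<alpha> I V x = {y\<in>V. \<forall>i\<in>I. sgn (\<alpha> i \<bullet> y) = sgn (\<alpha> i \<bullet> x)}"

lemma sign_class_self: "x \<in> V \<Longrightarrow> x \<in> sign_class \<alpha> I V x"
  by (simp add: sign_class_def)

lemma sign_class_eq: "y \<in> sign_class \<alpha> I V x \<Longrightarrow> sign_class \<alpha> I V y = sign_class \<alpha> I V x"
  by (auto simp: sign_class_def)

lemma sign_class_antimono: "J \<subseteq> I \<Longrightarrow> sign_class \<alpha> I V x \<subseteq> sign_class \<alpha> J V x"
  by (auto simp: sign_class_def)

lemma sign_class_subset_generic: "x \<in> generic \<alpha> I V \<Longrightarrow> sign_class \<alpha> I V x \<subseteq> generic \<alpha> I V"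
  by (auto simp: generic_def sign_class_def) (metis sgn_zero_iff)

lemma sign_class_subset_Hpos_iff:
  "k \<in> I \<Longrightarrow> x \<in> V \<Longrightarrow> sign_class \<alpha> I V x \<subseteq> Hpos \<alpha> k \<longleftrightarrow> 0 < \<alpha> k \<bullet> x"
  by (auto simp: sign_class_def Hpos_def sgn_if split: if_splits)

lemma sign_class_subset_Hneg: "k \<in> I \<Longrightarrow> \<alpha> k \<bullet> x < 0 \<Longrightarrow> sign_class \<alpha> I V x \<subseteq> Hneg \<alpha> k"
  by (auto simp: sign_class_def Hneg_def sgn_if split: if_splits)

lemma convex_sgn_inner_eq: "convex {y. sgn (a \<bullet> y) = (s::real)}"
proof -
  have "{y. sgn (a \<bullet> y) = s} =
    (if s = 1 then {y. a \<bullet> y > 0} else if s = -1 then {y. a \<bullet> y < 0}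
     else if s = 0 then {y. a \<bullet> y = 0} else {})"
    by (auto simp: sgn_if)
  then show ?thesis by (simp add: convex_halfspace_gt convex_halfspace_lt convex_hyperplane)
qed

lemma convex_sign_class: "convex V \<Longrightarrow> convex (sign_class \<alpha> I V x)"
proof -
  assume "convex V"
  moreover have "sign_class \<alpha> I V x = V \<inter> (\<Inter>i\<in>I. {y. sgn (\<alpha> i \<bullet> y) = sgn (\<alpha> i \<bullet> x)})"
    by (auto simp: sign_class_def)
  ultimately show ?thesis by (simp add: convex_Int convex_INT convex_sgn_inner_eq)
qed

lemma connected_component_generic:
  assumes V: "convex V" and x: "x \<in> generic \<alpha> I V"
  shows "connected_component_set (generic \<alpha> I V) x = sign_class \<alpha> I V x"
proof
  have "x \<in> sign_class \<alpha> I V x" using x by (simp add: generic_def sign_class_self)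
  then show "sign_class \<alpha> I V x \<subseteq> connected_component_set (generic \<alpha> I V) x"
    using connected_component_maximal convex_connected[OF convex_sign_class[OF V]]
      sign_class_subset_generic[OF x] by blast
next
  let ?C = "connected_component_set (generic \<alpha> I V) x"
  have C_sub: "?C \<subseteq> generic \<alpha> I V" by (rule connected_component_subset)
  have xC: "x \<in> ?C" using x by simp
  show "?C \<subseteq> sign_class \<alpha> I V x"
  proof
    fix y assume y: "y \<in> ?C"
    have "sgn (\<alpha> i \<bullet> y) = sgn (\<alpha> i \<bullet> x)" if i: "i \<in> I" for i
    proof (rule ccontr)
      assume ne: "sgn (\<alpha> i \<bullet> y) \<noteq> sgn (\<alpha> i \<bullet> x)"
      have "\<alpha> i \<bullet> x \<noteq> 0" "\<alpha> i \<bullet> y \<noteq> 0" using x y C_sub i by (auto simp: generic_def)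
      then consider "\<alpha> i \<bullet> x \<le> 0" "0 \<le> \<alpha> i \<bullet> y" | "\<alpha> i \<bullet> y \<le> 0" "0 \<le> \<alpha> i \<bullet> x"
        using ne by (fastforce simp: sgn_if split: if_splits)
      then obtain z where "z \<in> ?C" "\<alpha> i \<bullet> z = 0"
        by cases (use connected_ivt_hyperplane[OF connected_connected_component] xC y in blast)+
      then show False using C_sub i by (auto simp: generic_def)
    qed
    then show "y \<in> sign_class \<alpha> I V x" using y C_sub by (auto simp: generic_def sign_class_def)
  qed
qed

lemma components_generic:
  "convex V \<Longrightarrow> components (generic \<alpha> I V) = sign_class \<alpha> I V ` generic \<alpha> I V"
  unfolding components_def by (rule image_cong) (simp_all add: connected_component_generic)

lemma regions_restr_NBC:
  fixes \<alpha> :: "nat \<Rightarrow> real^'n"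
  assumes "B \<subseteq> {1..k}" and "NBC \<alpha> m B"
  shows "regions (capB \<alpha> B) (restr \<alpha> m k B)
    = sign_class \<alpha> {k+1..m} (capB \<alpha> B) ` generic \<alpha> {k+1..m} (capB \<alpha> B)"
proof -
  have "\<not> capB \<alpha> B \<subseteq> hyp \<alpha> i" if "i \<in> {k+1..m}" for i
  proof (rule NBC_not_subset_hyp[OF assms(2)])
    show "i \<in> {1..m}" "\<forall>b\<in>B. b < i" using assms(1) that by auto
  qed
  moreover have "0 \<in> capB \<alpha> B \<inter> hyp \<alpha> i" for i by (simp add: zero_in_capB hyp_def)
  ultimately have "restr \<alpha> m k B = (\<lambda>i. capB \<alpha> B \<inter> hyp \<alpha> i) ` {k+1..m}"
    unfolding restr_def by blast
  then have "capB \<alpha> B - \<Union>(restr \<alpha> m k B) = generic \<alpha> {k+1..m} (capB \<alpha> B)"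
    by (auto simp: generic_def hyp_def)
  then show ?thesis
    unfolding regions_def by (simp add: components_generic subspace_imp_convex[OF subspace_capB])
qed

lemma mem_scrB_iff:
  "p \<in> scrB \<alpha> m k \<longleftrightarrow> (\<exists>B x. p = (B, sign_class \<alpha> {k+1..m} (capB \<alpha> B) x) \<and> B \<subseteq> {1..k}
     \<and> NBC \<alpha> m B \<and> x \<in> generic \<alpha> {k+1..m} (capB \<alpha> B))"
  unfolding scrB_def by (auto simp: regions_restr_NBC)

section \<open>The maps phi k\<close>

context
  fixes \<alpha> :: "nat \<Rightarrow> real^'n" and m k :: nat
  assumes k: "k \<in> {1..m}"
begin

text \<open>For a generic point x of the flat capB B, Delta B x and Delta' B x are the regions of
  A_{k-1}^c/B and A_k^c/B containing x, the Delta_{k-1} and Delta_k' of phi_k.\<close>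

abbreviation Delta :: "nat set \<Rightarrow> real^'n \<Rightarrow> (real^'n) set" where
  "Delta B x \<equiv> sign_class \<alpha> {k..m} (capB \<alpha> B) x"

abbreviation Delta' :: "nat set \<Rightarrow> real^'n \<Rightarrow> (real^'n) set" where
  "Delta' B x \<equiv> sign_class \<alpha> {k+1..m} (capB \<alpha> B) x"

lemma atLeastAtMost_k_eq: "{k..m} = insert k {k+1..m}"
  using k by auto

lemma subset_pred_iff: "B \<subseteq> {1..k-1} \<longleftrightarrow> B \<subseteq> {1..k} \<and> k \<notin> B"
proof -
  have "{1..k-1} = {1..k} - {k}" using k by auto
  then show ?thesis by blast
qed

lemma generic_k_iff: "x \<in> generic \<alpha> {k..m} V \<longleftrightarrow> x \<in> generic \<alpha> {k+1..m} V \<and> \<alpha> k \<bullet> x \<noteq> 0"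
  by (auto simp: generic_def atLeastAtMost_k_eq)

lemma Delta_eq: "Delta B x = {y \<in> Delta' B x. sgn (\<alpha> k \<bullet> y) = sgn (\<alpha> k \<bullet> x)}"
  by (auto simp: sign_class_def atLeastAtMost_k_eq)

lemma mem_scrB_pred_iff:
  "p \<in> scrB \<alpha> m (k - 1) \<longleftrightarrow> (\<exists>B x. p = (B, Delta B x) \<and> B \<subseteq> {1..k-1} \<and> NBC \<alpha> m B
     \<and> x \<in> generic \<alpha> {k..m} (capB \<alpha> B))"
proof -
  have "k - 1 + 1 = k" using k by simp
  then show ?thesis by (simp add: mem_scrB_iff)
qed

lemma NBC_not_subset_hyp_k: "B \<subseteq> {1..k-1} \<Longrightarrow> NBC \<alpha> m B \<Longrightarrow> \<not> capB \<alpha> B \<subseteq> hyp \<alpha> k"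
  by (rule NBC_not_subset_hyp) (use k in force)+

lemma region_containing_Delta_iff:
  assumes B: "B \<subseteq> {1..k-1}" "NBC \<alpha> m B" and x: "x \<in> generic \<alpha> {k..m} (capB \<alpha> B)"
  shows "R \<in> regions (capB \<alpha> B) (restr \<alpha> m k B) \<and> Delta B x \<subseteq> R \<longleftrightarrow> R = Delta' B x"
proof -
  have regions: "regions (capB \<alpha> B) (restr \<alpha> m k B) = Delta' B ` generic \<alpha> {k+1..m} (capB \<alpha> B)"
    using B(2) B(1)[unfolded subset_pred_iff] by (intro regions_restr_NBC) auto
  have x': "x \<in> generic \<alpha> {k+1..m} (capB \<alpha> B)" using x by (simp add: generic_k_iff)
  have "x \<in> Delta B x" using x by (simp add: generic_def sign_class_self)
  show ?thesis
  proof
    assume R: "R \<in> regions (capB \<alpha> B) (restr \<alpha> m k B) \<and> Delta B x \<subseteq> R"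
    then obtain x' where "R = Delta' B x'" by (auto simp: regions)
    with R \<open>x \<in> Delta B x\<close> show "R = Delta' B x" using sign_class_eq by blast
  next
    assume "R = Delta' B x"
    then show "R \<in> regions (capB \<alpha> B) (restr \<alpha> m k B) \<and> Delta B x \<subseteq> R"
      using regions x' by (auto simp: atLeastAtMost_k_eq intro: sign_class_antimono[THEN subsetD])
  qed
qed

definition cut_by_hyp :: "nat set \<Rightarrow> real^'n \<Rightarrow> bool" where
  "cut_by_hyp B x \<longleftrightarrow> 0 < \<alpha> k \<bullet> x \<and> (\<exists>y\<in>Delta' B x. \<alpha> k \<bullet> y \<le> 0)"

lemma phi_Delta:
  assumes B: "B \<subseteq> {1..k-1}" "NBC \<alpha> m B" and x: "x \<in> generic \<alpha> {k..m} (capB \<alpha> B)"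
  shows "phi \<alpha> m k (B, Delta B x) =
    (if cut_by_hyp B x then (insert k B, Delta' B x \<inter> hyp \<alpha> k) else (B, Delta' B x))"
proof -
  have regDelta: "regDelta \<alpha> m k B (Delta B x) = Delta' B x"
    unfolding regDelta_def using region_containing_Delta_iff[OF B x] by simp
  have pos: "Delta B x \<subseteq> Hpos \<alpha> k \<longleftrightarrow> 0 < \<alpha> k \<bullet> x"
    using x k by (intro sign_class_subset_Hpos_iff) (auto simp: generic_def)
  have "Delta B x \<noteq> Delta' B x \<longleftrightarrow> (\<exists>y\<in>Delta' B x. \<alpha> k \<bullet> y \<le> 0)" if "0 < \<alpha> k \<bullet> x"
  proof -
    have "Delta B x = {y \<in> Delta' B x. 0 < \<alpha> k \<bullet> y}"
      using that by (auto simp: Delta_eq sgn_if)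
    then show ?thesis using not_less by blast
  qed
  then show ?thesis unfolding phi_def Let_def fst_conv snd_conv regDelta pos cut_by_hyp_def by auto
qed

lemma cut_by_hyp_face:
  assumes "cut_by_hyp B x" and "x \<in> capB \<alpha> B"
  shows "\<exists>z\<in>Delta' B x. \<alpha> k \<bullet> z = 0"
proof -
  obtain y where "y \<in> Delta' B x" "\<alpha> k \<bullet> y \<le> 0" "0 < \<alpha> k \<bullet> x"
    using assms(1) by (auto simp: cut_by_hyp_def)
  moreover have "x \<in> Delta' B x" using assms(2) by (rule sign_class_self)
  moreover have "connected (Delta' B x)"
    by (intro convex_connected convex_sign_class subspace_imp_convex subspace_capB)
  ultimately show ?thesis using connected_ivt_hyperplane[of "Delta' B x" y x "\<alpha> k" 0] by auto
qed

lemma Delta'_Int_hyp: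
  "z \<in> Delta' B x \<Longrightarrow> Delta' B x \<inter> hyp \<alpha> k = sign_class \<alpha> {k+1..m} (capB \<alpha> (insert k B)) z"
  by (auto simp: sign_class_def capB_insert)

lemma not_cut_by_hyp_pos_iff:
  assumes "\<not> cut_by_hyp B x" and "x \<in> capB \<alpha> B"
  shows "0 < \<alpha> k \<bullet> x \<longleftrightarrow> Delta' B x \<subseteq> Hpos \<alpha> k"
  using assms sign_class_self[of x "capB \<alpha> B" \<alpha> "{k+1..m}"]
  unfolding cut_by_hyp_def Hpos_def by force

lemma phi_into:
  assumes "p \<in> scrB \<alpha> m (k - 1)"
  shows "phi \<alpha> m k p \<in> scrB \<alpha> m k"
proof -
  obtain B x where p: "p = (B, Delta B x)" and B: "B \<subseteq> {1..k-1}" "NBC \<alpha> m B"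
    and x: "x \<in> generic \<alpha> {k..m} (capB \<alpha> B)"
    using assms unfolding mem_scrB_pred_iff by blast
  have x': "x \<in> generic \<alpha> {k+1..m} (capB \<alpha> B)" using x by (simp add: generic_k_iff)
  have "B \<subseteq> {1..k}" using B(1) unfolding subset_pred_iff by blast
  show ?thesis
  proof (cases "cut_by_hyp B x")
    case True
    then obtain z where z: "z \<in> Delta' B x" "\<alpha> k \<bullet> z = 0"
      using cut_by_hyp_face[OF True] x by (auto simp: generic_def)
    then have z': "z \<in> generic \<alpha> {k+1..m} (capB \<alpha> (insert k B))"
      using sign_class_subset_generic[OF x'] by (auto simp: generic_def capB_insert hyp_def)
    moreover have "NBC \<alpha> m (insert k B)"
      using z' by (intro NBC_insert[OF B(2) k]) (auto simp: generic_def)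
    moreover have "insert k B \<subseteq> {1..k}" using \<open>B \<subseteq> {1..k}\<close> k by auto
    ultimately show ?thesis
      unfolding p phi_Delta[OF B x] mem_scrB_iff using True Delta'_Int_hyp[OF z(1)] by auto
  next
    case False
    then show ?thesis
      unfolding p phi_Delta[OF B x] mem_scrB_iff using \<open>B \<subseteq> {1..k}\<close> B x' by auto
  qed
qed

lemma phi_inj: "inj_on (phi \<alpha> m k) (scrB \<alpha> m (k - 1))"
proof (rule inj_onI)
  fix p1 p2 assume p1: "p1 \<in> scrB \<alpha> m (k - 1)" and p2: "p2 \<in> scrB \<alpha> m (k - 1)"
    and eq: "phi \<alpha> m k p1 = phi \<alpha> m k p2"
  obtain B1 x1 where p1_eq: "p1 = (B1, Delta B1 x1)" and B1: "B1 \<subseteq> {1..k-1}" "NBC \<alpha> m B1"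
    and x1: "x1 \<in> generic \<alpha> {k..m} (capB \<alpha> B1)"
    using p1 unfolding mem_scrB_pred_iff by blast
  obtain B2 x2 where p2_eq: "p2 = (B2, Delta B2 x2)" and B2: "B2 \<subseteq> {1..k-1}" "NBC \<alpha> m B2"
    and x2: "x2 \<in> generic \<alpha> {k..m} (capB \<alpha> B2)"
    using p2 unfolding mem_scrB_pred_iff by blast
  have "k \<notin> B1" "k \<notin> B2" using B1(1) B2(1) unfolding subset_pred_iff by blast+
  note eq = eq[unfolded p1_eq p2_eq phi_Delta[OF B1 x1] phi_Delta[OF B2 x2]]
  have x1V: "x1 \<in> capB \<alpha> B1" and x2V: "x2 \<in> capB \<alpha> B2" using x1 x2 by (auto simp: generic_def)
  consider "cut_by_hyp B1 x1" "cut_by_hyp B2 x2" | "\<not> cut_by_hyp B1 x1" "\<not> cut_by_hyp B2 x2"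
    | "cut_by_hyp B1 x1 \<noteq> cut_by_hyp B2 x2" by blast
  then show "p1 = p2"
  proof cases
    case 1
    then have "insert k B1 = insert k B2"
      and faces: "Delta' B1 x1 \<inter> hyp \<alpha> k = Delta' B2 x2 \<inter> hyp \<alpha> k"
      using eq by simp_all
    then have B: "B1 = B2" using insert_ident \<open>k \<notin> B1\<close> \<open>k \<notin> B2\<close> by metis
    obtain z where z: "z \<in> Delta' B1 x1" "\<alpha> k \<bullet> z = 0" using cut_by_hyp_face[OF 1(1) x1V] by blast
    then have "z \<in> Delta' B1 x1 \<inter> hyp \<alpha> k" by (simp add: hyp_def)
    then have "z \<in> Delta' B1 x2" using faces B by (metis IntD1)
    then have "Delta' B1 x1 = Delta' B1 x2" using sign_class_eq[OF z(1)] sign_class_eq by metis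
    moreover have "sgn (\<alpha> k \<bullet> x1) = sgn (\<alpha> k \<bullet> x2)" using 1 by (simp add: cut_by_hyp_def)
    ultimately show ?thesis using B by (simp add: p1_eq p2_eq Delta_eq)
  next
    case 2
    then have B: "B1 = B2" and same: "Delta' B1 x1 = Delta' B2 x2" using eq by (metis prod.inject)+
    have "0 < \<alpha> k \<bullet> x1 \<longleftrightarrow> 0 < \<alpha> k \<bullet> x2"
      using not_cut_by_hyp_pos_iff[OF 2(1) x1V] not_cut_by_hyp_pos_iff[OF 2(2) x2V] same by simp
    moreover have "\<alpha> k \<bullet> x1 \<noteq> 0" "\<alpha> k \<bullet> x2 \<noteq> 0" using x1 x2 by (auto simp: generic_k_iff)
    ultimately have "sgn (\<alpha> k \<bullet> x1) = sgn (\<alpha> k \<bullet> x2)" by (auto simp: sgn_if)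
    then show ?thesis using B same by (simp add: p1_eq p2_eq Delta_eq)
  next
    case 3
    then show ?thesis using eq \<open>k \<notin> B1\<close> \<open>k \<notin> B2\<close> by (cases "cut_by_hyp B1 x1") auto
  qed
qed

lemma exists_sgn_off_hyp:
  assumes B: "B \<subseteq> {1..k-1}" "NBC \<alpha> m B" and y: "y \<in> generic \<alpha> {k+1..m} (capB \<alpha> B)"
    and on_hyp: "\<alpha> k \<bullet> y = 0"
  shows "\<exists>x\<in>Delta' B y. sgn (\<alpha> k \<bullet> x) = sgn c"
proof -
  obtain v where v: "v \<in> capB \<alpha> B" "\<alpha> k \<bullet> v = c"
    using subspace_inner_eq_exists[OF subspace_capB NBC_not_subset_hyp_k[OF B]] by blast
  have "\<exists>e>0. \<forall>i\<in>{k+1..m}. sgn (\<alpha> i \<bullet> (y + e *\<^sub>R v)) = sgn (\<alpha> i \<bullet> y)"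
    using y by (intro sgn_inner_perturb) (auto simp: generic_def)
  then obtain e :: real where e: "e > 0" "\<forall>i\<in>{k+1..m}. sgn (\<alpha> i \<bullet> (y + e *\<^sub>R v)) = sgn (\<alpha> i \<bullet> y)"
    by blast
  have "y + e *\<^sub>R v \<in> capB \<alpha> B"
    using y v by (intro subspace_add subspace_scale subspace_capB) (auto simp: generic_def)
  then have "y + e *\<^sub>R v \<in> Delta' B y" using e by (simp add: sign_class_def)
  moreover have "sgn (\<alpha> k \<bullet> (y + e *\<^sub>R v)) = sgn c"
    using e v on_hyp by (simp add: inner_add_right sgn_mult)
  ultimately show ?thesis by blast
qed

lemma phi_reaches_insert:
  assumes B: "B \<subseteq> {1..k-1}" and nbc: "NBC \<alpha> m (insert k B)"
    and w: "w \<in> generic \<alpha> {k+1..m} (capB \<alpha> (insert k B))"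
  shows "(insert k B, sign_class \<alpha> {k+1..m} (capB \<alpha> (insert k B)) w) \<in> phi \<alpha> m k ` scrB \<alpha> m (k - 1)"
proof -
  have "NBC \<alpha> m B" using nbc by (rule NBC_subset) auto
  have w': "w \<in> generic \<alpha> {k+1..m} (capB \<alpha> B)" "\<alpha> k \<bullet> w = 0"
    using w by (auto simp: generic_def capB_insert hyp_def)
  obtain x where x: "x \<in> Delta' B w" "sgn (\<alpha> k \<bullet> x) = sgn 1"
    using exists_sgn_off_hyp[OF B \<open>NBC \<alpha> m B\<close> w'] by blast
  have x_generic: "x \<in> generic \<alpha> {k..m} (capB \<alpha> B)"
    using x sign_class_subset_generic[OF w'(1)] by (auto simp: generic_k_iff sgn_1)
  have "w \<in> Delta' B w" using w' by (simp add: generic_def sign_class_self)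
  then have w_in: "w \<in> Delta' B x" using sign_class_eq[OF x(1)] by simp
  then have "cut_by_hyp B x" unfolding cut_by_hyp_def using x(2) w'(2) by (force simp: sgn_1_pos)
  then have "phi \<alpha> m k (B, Delta B x) = (insert k B, sign_class \<alpha> {k+1..m} (capB \<alpha> (insert k B)) w)"
    using phi_Delta[OF B \<open>NBC \<alpha> m B\<close> x_generic] Delta'_Int_hyp[OF w_in] by simp
  moreover have "(B, Delta B x) \<in> scrB \<alpha> m (k - 1)"
    unfolding mem_scrB_pred_iff using B \<open>NBC \<alpha> m B\<close> x_generic by blast
  ultimately show ?thesis by (metis image_eqI)
qed

lemma phi_reaches:
  assumes B: "B \<subseteq> {1..k-1}" "NBC \<alpha> m B" and w: "w \<in> generic \<alpha> {k+1..m} (capB \<alpha> B)"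
  shows "(B, Delta' B w) \<in> phi \<alpha> m k ` scrB \<alpha> m (k - 1)"
proof -
  have wV: "w \<in> Delta' B w" using w by (simp add: generic_def sign_class_self)
  obtain x where x: "x \<in> Delta' B w" "x \<in> generic \<alpha> {k..m} (capB \<alpha> B)" "\<not> cut_by_hyp B x"
  proof (cases "\<exists>y\<in>Delta' B w. \<alpha> k \<bullet> y \<le> 0")
    case True
    then obtain y where y: "y \<in> Delta' B w" "\<alpha> k \<bullet> y \<le> 0" by blast
    have y_generic: "y \<in> generic \<alpha> {k+1..m} (capB \<alpha> B)" using y sign_class_subset_generic[OF w] by blast
    obtain x where "x \<in> Delta' B w" "\<alpha> k \<bullet> x < 0"
    proof (cases "\<alpha> k \<bullet> y = 0")
      case True
      then obtain x where "x \<in> Delta' B y" "sgn (\<alpha> k \<bullet> x) = sgn (-1)"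
        using exists_sgn_off_hyp[OF B y_generic] by blast
      then show thesis using that sign_class_eq[OF y(1)] by (auto simp: sgn_if split: if_splits)
    next
      case False
      then show thesis using that y by simp
    qed
    then show thesis using that sign_class_subset_generic[OF w]
      by (auto simp: generic_k_iff cut_by_hyp_def)
  next
    case False
    then show thesis using that[of w] w wV by (auto simp: generic_k_iff cut_by_hyp_def not_le)
  qed
  then have "phi \<alpha> m k (B, Delta B x) = (B, Delta' B w)"
    using phi_Delta[OF B x(2)] sign_class_eq[OF x(1)] by simp
  moreover have "(B, Delta B x) \<in> scrB \<alpha> m (k - 1)"
    unfolding mem_scrB_pred_iff using B x(2) by blast
  ultimately show ?thesis by (metis image_eqI)
qed

lemma phi_surj: "scrB \<alpha> m k \<subseteq> phi \<alpha> m k ` scrB \<alpha> m (k - 1)"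
proof
  fix q assume "q \<in> scrB \<alpha> m k"
  then obtain B' w where q: "q = (B', sign_class \<alpha> {k+1..m} (capB \<alpha> B') w)" and B': "B' \<subseteq> {1..k}"
    "NBC \<alpha> m B'" and w: "w \<in> generic \<alpha> {k+1..m} (capB \<alpha> B')"
    unfolding mem_scrB_iff by blast
  show "q \<in> phi \<alpha> m k ` scrB \<alpha> m (k - 1)"
  proof (cases "k \<in> B'")
    case True
    then have B'_eq: "B' = insert k (B' - {k})" by blast
    have "B' - {k} \<subseteq> {1..k-1}" using B'(1) unfolding subset_pred_iff by blast
    from phi_reaches_insert[OF this] show ?thesis using B' w q B'_eq by simp
  next
    case False
    then have "B' \<subseteq> {1..k-1}" using B'(1) unfolding subset_pred_iff by blast
    then show ?thesis using phi_reaches B' w q by blast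
  qed
qed

lemma phi_bij: "bij_betw (phi \<alpha> m k) (scrB \<alpha> m (k - 1)) (scrB \<alpha> m k)"
  unfolding bij_betw_def using phi_inj phi_into phi_surj by blast

lemma phi_well_defined:
  assumes "p \<in> scrB \<alpha> m (k - 1)"
  shows "(\<exists>!R. R \<in> regions (capB \<alpha> (fst p)) (restr \<alpha> m k (fst p)) \<and> snd p \<subseteq> R)
    \<and> (snd p \<subseteq> Hpos \<alpha> k \<or> snd p \<subseteq> Hneg \<alpha> k)"
proof -
  obtain B x where p: "p = (B, Delta B x)" and B: "B \<subseteq> {1..k-1}" "NBC \<alpha> m B"
    and x: "x \<in> generic \<alpha> {k..m} (capB \<alpha> B)"
    using assms unfolding mem_scrB_pred_iff by blast
  have "0 < \<alpha> k \<bullet> x \<or> \<alpha> k \<bullet> x < 0" using x by (auto simp: generic_k_iff)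
  then have "Delta B x \<subseteq> Hpos \<alpha> k \<or> Delta B x \<subseteq> Hneg \<alpha> k"
    using sign_class_subset_Hpos_iff[of k "{k..m}" x "capB \<alpha> B" \<alpha>]
      sign_class_subset_Hneg[of k "{k..m}" \<alpha> x "capB \<alpha> B"] x k by (auto simp: generic_def)
  then show ?thesis unfolding p using region_containing_Delta_iff[OF B x] by auto
qed

end

section \<open>Regions and NBC sets\<close>

lemma scrB_zero:
  fixes \<alpha> :: "nat \<Rightarrow> real^'n"
  assumes nonzero: "\<forall>i\<in>{1..m}. \<alpha> i \<noteq> 0"
  shows "scrB \<alpha> m 0 = (\<lambda>\<Delta>. ({}, \<Delta>)) ` regionA \<alpha> m"
proof -
  have "hyp \<alpha> i \<noteq> UNIV" if "i \<in> {1..m}" for i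
  proof
    assume "hyp \<alpha> i = UNIV"
    then have "\<alpha> i \<in> hyp \<alpha> i" by simp
    then have "\<alpha> i \<bullet> \<alpha> i = 0" by (simp add: hyp_def)
    then show False using nonzero that by simp
  qed
  moreover have "0 \<in> hyp \<alpha> i" for i by (simp add: hyp_def)
  ultimately have "restr \<alpha> m 0 {} = hyp \<alpha> ` {1..m}"
    unfolding restr_def capB_empty by force
  then have "regions (capB \<alpha> {}) (restr \<alpha> m 0 {}) = regionA \<alpha> m"
    by (simp add: regionA_def capB_empty)
  then show ?thesis using NBC_empty[OF nonzero] by (auto simp: scrB_def)
qed

lemma scrB_top:
  fixes \<alpha> :: "nat \<Rightarrow> real^'n"
  shows "scrB \<alpha> m m = (\<lambda>B. (B, capB \<alpha> B)) ` NBCset \<alpha> m"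
proof -
  have "sign_class \<alpha> {m+1..m} V x = V" "generic \<alpha> {m+1..m} V = V" for V and x :: "real^'n"
    by (auto simp: sign_class_def generic_def)
  then show ?thesis
    using zero_in_capB by (fastforce simp: mem_scrB_iff NBCset_def NBC_def)
qed

lemma bij_betw_phiComp:
  assumes "\<forall>k\<in>{1..m}. bij_betw (phi \<alpha> m k) (scrB \<alpha> m (k - 1)) (scrB \<alpha> m k)"
  shows "j \<le> m \<Longrightarrow> bij_betw (phiComp \<alpha> m j) (scrB \<alpha> m 0) (scrB \<alpha> m j)"
proof (induction j)
  case 0
  show ?case unfolding phiComp.simps by (rule bij_betw_id)
next
  case (Suc j)
  then have "bij_betw (phiComp \<alpha> m j) (scrB \<alpha> m 0) (scrB \<alpha> m j)" by simp
  moreover have "bij_betw (phi \<alpha> m (Suc j)) (scrB \<alpha> m j) (scrB \<alpha> m (Suc j))"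
    using assms Suc.prems by force
  ultimately show ?case unfolding phiComp.simps by (rule bij_betw_trans)
qed

theorem mainTheorem6:
  fixes \<alpha> :: "nat \<Rightarrow> real^'n" and m :: nat
  assumes "\<forall>i\<in>{1..m}. \<alpha> i \<noteq> 0"
  shows "(\<forall>k\<in>{1..m}.
            (\<forall>p\<in>scrB \<alpha> m (k - 1).
               (\<exists>!R. R \<in> regions (capB \<alpha> (fst p)) (restr \<alpha> m k (fst p)) \<and> snd p \<subseteq> R) \<and>
               (snd p \<subseteq> Hpos \<alpha> k \<or> snd p \<subseteq> Hneg \<alpha> k)) \<and>
            bij_betw (phi \<alpha> m k) (scrB \<alpha> m (k - 1)) (scrB \<alpha> m k))
      \<and> (\<forall>\<Delta>\<in>regionA \<alpha> m. \<exists>B. phiComp \<alpha> m m ({}, \<Delta>) = (B, capB \<alpha> B))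
      \<and> bij_betw (\<lambda>\<Delta>. fst (phiComp \<alpha> m m ({}, \<Delta>))) (regionA \<alpha> m) (NBCset \<alpha> m)"
proof -
  have steps: "\<forall>k\<in>{1..m}.
            (\<forall>p\<in>scrB \<alpha> m (k - 1).
               (\<exists>!R. R \<in> regions (capB \<alpha> (fst p)) (restr \<alpha> m k (fst p)) \<and> snd p \<subseteq> R) \<and>
               (snd p \<subseteq> Hpos \<alpha> k \<or> snd p \<subseteq> Hneg \<alpha> k)) \<and>
            bij_betw (phi \<alpha> m k) (scrB \<alpha> m (k - 1)) (scrB \<alpha> m k)"
    using phi_well_defined phi_bij by blast
  have start: "bij_betw (\<lambda>\<Delta>. ({}, \<Delta>)) (regionA \<alpha> m) (scrB \<alpha> m 0)"
    unfolding scrB_zero[OF assms] by (rule bij_betw_imageI) (auto simp: inj_on_def)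
  have run: "bij_betw (phiComp \<alpha> m m \<circ> (\<lambda>\<Delta>. ({}, \<Delta>))) (regionA \<alpha> m) (scrB \<alpha> m m)"
    using bij_betw_trans[OF start bij_betw_phiComp] steps by blast
  have finish: "bij_betw fst (scrB \<alpha> m m) (NBCset \<alpha> m)"
    unfolding scrB_top by (rule bij_betw_imageI) (auto simp: inj_on_def image_image)
  have "\<exists>B. phiComp \<alpha> m m ({}, \<Delta>) = (B, capB \<alpha> B)" if "\<Delta> \<in> regionA \<alpha> m" for \<Delta>
    using bij_betwE[OF run] that unfolding scrB_top by auto
  moreover have "bij_betw (fst \<circ> (phiComp \<alpha> m m \<circ> (\<lambda>\<Delta>. ({}, \<Delta>)))) (regionA \<alpha> m) (NBCset \<alpha> m)"
    using run finish by (rule bij_betw_trans)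
  ultimately show ?thesis using steps by (auto simp: comp_def)
qed

end
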